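(* Let $\Omega\subseteq\mathbb{R}^n$ ($n>1$) be open, let $\lambda\neq0$ be a complex number, let $\underline{f}$ be a vector-valued function on $\Omega$ and set $u=\partial_{\underline{x}}\underline{f}-\underline{f}^2$. Assume that $\underline{g}=\sum_{j=1}^n g_je_j$ is a vector-valued solution of \[\underline{g}\,(-\Delta_n+u)+2\sum_{j=1}^n g_j\,\partial_{x_j}\underline{f}=\lambda^2\underline{g}.\] Then the scalar-valued function $\phi=[\partial_{\underline{x}}^{-\underline{f}}\underline{g}]_0$ and the bivector-valued function $H_2=[\partial_{\underline{x}}^{-\underline{f}}\underline{g}]_2$ satisfy \[(\phi+H_2)(-\Delta_n+u)+2\sum_{j=1}^n [e_jH_2]_1\,\partial_{x_j}\underline{f}=\lambda^2(\phi+H_2).\] Here, for a Clifford-valued function $G$, $G(-\Delta_n+u)$ stands for $-\Delta_nG+G\,u$.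
   Context: $\mathbb{R}_{0,n}$ is the real Clifford algebra generated by an orthonormal basis $e_1,\dots,e_n$ of $\mathbb{R}^n$ with relations $e_je_k+e_ke_j=-2\delta_{jk}$, with basis $e_A$ ($A\subseteq\{1,\dots,n\}$); $\mathbb{C}_n=\mathbb{R}_{0,n}\otimes\mathbb{C}$. For an element $a$, $[a]_k$ denotes its projection onto the $k$-vectors (span of $e_A$ with $|A|=k$); $0$-vectors are scalars, $2$-vectors bivectors. The Dirac operator is $\partial_{\underline{x}}=\sum_{j=1}^n e_j\partial_{x_j}$, acting from the left; $\Delta_n=-\partial_{\underline{x}}^2$ is the Laplacian. $M^f$ is right multiplication by $f$, and $\partial_{\underline{x}}^{-f}g=\partial_{\underline{x}}g-gf$. *)

theory Defs
  imports "HOL-Analysis.Analysis"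
begin

text \<open>Complexified Clifford algebra C_n = R_{0,n} (x) C with generators indexed by a
finite linearly ordered type 'n (so n = CARD('n)).  An element is given by its
coefficients on the basis blades e_A, A a subset of the generator set.\<close>

type_synonym 'n cl = "'n set \<Rightarrow> complex"

text \<open>Sign in e_A e_B = sgn(A,B) e_(A symmetric difference B), using e_j e_j = -1.\<close>
definition blade_sign :: "'n::linorder set \<Rightarrow> 'n set \<Rightarrow> complex" where
  "blade_sign A B = (-1) ^ (card {(a, b). a \<in> A \<and> b \<in> B \<and> b < a} + card (A \<inter> B))"

definition cl_mult :: "('n::{finite,linorder}) cl \<Rightarrow> 'n cl \<Rightarrow> 'n cl" (infixl "\<otimes>\<^sub>c" 70) where
  "x \<otimes>\<^sub>c y = (\<lambda>C. \<Sum>A\<in>UNIV. blade_sign A (A - C \<union> (C - A)) * x A * y (A - C \<union> (C - A)))"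

definition cl_add :: "'n cl \<Rightarrow> 'n cl \<Rightarrow> 'n cl" (infixl "\<oplus>\<^sub>c" 65) where
  "x \<oplus>\<^sub>c y = (\<lambda>A. x A + y A)"

definition cl_minus :: "'n cl \<Rightarrow> 'n cl \<Rightarrow> 'n cl" (infixl "\<ominus>\<^sub>c" 65) where
  "x \<ominus>\<^sub>c y = (\<lambda>A. x A - y A)"

definition cl_scale :: "complex \<Rightarrow> 'n cl \<Rightarrow> 'n cl" (infixr "\<cdot>\<^sub>c" 75) where
  "c \<cdot>\<^sub>c x = (\<lambda>A. c * x A)"

definition cl_sum :: "('i \<Rightarrow> 'n cl) \<Rightarrow> 'i set \<Rightarrow> 'n cl" where
  "cl_sum F I = (\<lambda>A. \<Sum>i\<in>I. F i A)"

definition cl_e :: "'n \<Rightarrow> 'n cl" where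
  "cl_e j = (\<lambda>A. if A = {j} then 1 else 0)"

definition grade :: "nat \<Rightarrow> 'n cl \<Rightarrow> 'n cl" where
  "grade k x = (\<lambda>A. if card A = k then x A else 0)"

definition is_vector :: "'n cl \<Rightarrow> bool" where
  "is_vector x \<longleftrightarrow> grade 1 x = x"

definition pd :: "'n::finite \<Rightarrow> ((real, 'n) vec \<Rightarrow> complex) \<Rightarrow> (real, 'n) vec \<Rightarrow> complex" where
  "pd j F x = vector_derivative (\<lambda>t. F (x + t *\<^sub>R axis j 1)) (at 0)"

fun ipd :: "'n::finite list \<Rightarrow> ((real, 'n) vec \<Rightarrow> complex) \<Rightarrow> (real, 'n) vec \<Rightarrow> complex" where
  "ipd [] F = F"
| "ipd (j # js) F = pd j (ipd js F)"

text \<open>C-infinity on an open set: all iterated partial derivatives exist and are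
(Frechet) differentiable, hence continuous.\<close>
definition smooth_on :: "((real, 'n::finite) vec) set \<Rightarrow> ((real, 'n) vec \<Rightarrow> complex) \<Rightarrow> bool" where
  "smooth_on \<Omega> F \<longleftrightarrow> (\<forall>js. ipd js F differentiable_on \<Omega>)"

definition cl_smooth_on :: "((real, 'n::finite) vec) set \<Rightarrow> ((real, 'n) vec \<Rightarrow> 'n cl) \<Rightarrow> bool" where
  "cl_smooth_on \<Omega> F \<longleftrightarrow> (\<forall>A. smooth_on \<Omega> (\<lambda>y. F y A))"

definition cl_pd :: "'n::finite \<Rightarrow> ((real, 'n) vec \<Rightarrow> 'n cl) \<Rightarrow> (real, 'n) vec \<Rightarrow> 'n cl" where
  "cl_pd j F x = (\<lambda>A. pd j (\<lambda>y. F y A) x)"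

definition dirac :: "((real, 'n::{finite,linorder}) vec \<Rightarrow> 'n cl) \<Rightarrow> (real, 'n) vec \<Rightarrow> 'n cl" where
  "dirac F x = cl_sum (\<lambda>j. cl_e j \<otimes>\<^sub>c cl_pd j F x) UNIV"

definition laplace :: "((real, 'n::{finite,linorder}) vec \<Rightarrow> 'n cl) \<Rightarrow> (real, 'n) vec \<Rightarrow> 'n cl" where
  "laplace F x = (\<lambda>A. - dirac (dirac F) x A)"

definition dirac_tw :: "((real, 'n::{finite,linorder}) vec \<Rightarrow> 'n cl) \<Rightarrow> ((real, 'n) vec \<Rightarrow> 'n cl) \<Rightarrow> (real, 'n) vec \<Rightarrow> 'n cl" where
  "dirac_tw f g x = dirac g x \<ominus>\<^sub>c (g x \<otimes>\<^sub>c f x)"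

definition potential :: "((real, 'n::{finite,linorder}) vec \<Rightarrow> 'n cl) \<Rightarrow> (real, 'n) vec \<Rightarrow> 'n cl" where
  "potential f x = dirac f x \<ominus>\<^sub>c (f x \<otimes>\<^sub>c f x)"

definition schr :: "((real, 'n::{finite,linorder}) vec \<Rightarrow> 'n cl) \<Rightarrow> ((real, 'n) vec \<Rightarrow> 'n cl) \<Rightarrow> (real, 'n) vec \<Rightarrow> 'n cl" where
  "schr u G x = (\<lambda>A. - laplace G x A) \<oplus>\<^sub>c (G x \<otimes>\<^sub>c u x)"

end

theory Submission
  imports Defs
begin

text \<open>Since \<open>f\<close> and \<open>g\<close> are vector fields, \<open>h = D\<^sup>-\<^sup>f g = D g - g f\<close> has only a scalar and a
  bivector part, so \<open>h = \<phi> + H\<^sub>2\<close>. The heart of the proof is that \<open>D\<^sup>-\<^sup>f\<close> intertwines the two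
  equations: applied to the defect \<open>g(-\<Delta> + u) + 2 \<Sigma> g\<^sub>j \<partial>\<^sub>j f - \<lambda>\<^sup>2 g\<close> of the vector equation it
  yields exactly the defect of the equation for \<open>h\<close>. After the Leibniz rule has expanded every
  derivative, this is an identity in the Clifford algebra which only uses that \<open>e\<^sub>j\<close>
  anticommutes with a vector \<open>v\<close> up to the scalar \<open>-2 v\<^sub>j\<close>, and that
  \<open>e\<^sub>k H - H e\<^sub>k = 2 [e\<^sub>k H]\<^sub>1\<close> for a bivector \<open>H\<close>. As the defect of \<open>g\<close> vanishes on the open set
  \<open>\<Omega>\<close>, so does its twisted derivative.\<close>

section \<open>The Clifford algebra as a ring\<close>

abbreviation symdiff :: "'a set \<Rightarrow> 'a set \<Rightarrow> 'a set" where
  "symdiff A B \<equiv> A - B \<union> (B - A)"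

lemma symdiff_cancel_left [simp]: "symdiff A (symdiff A B) = B"
  and symdiff_cancel_right [simp]: "symdiff (symdiff A B) B = A"
  by blast+

lemma card_filter_symdiff:
  assumes "finite S"
  shows "card {z\<in>S. p z \<in> A} + card {z\<in>S. p z \<in> B}
       = card {z\<in>S. p z \<in> symdiff A B} + 2 * card {z\<in>S. p z \<in> A \<inter> B}"
proof -
  define P where "P X = {z\<in>S. p z \<in> X}" for X
  have fin: "finite (P X)" for X using assms by (simp add: P_def)
  have "P A = P (A - B) \<union> P (A \<inter> B)" "P B = P (B - A) \<union> P (A \<inter> B)"
    "P (symdiff A B) = P (A - B) \<union> P (B - A)" by (auto simp: P_def)
  moreover have "P (A - B) \<inter> P (A \<inter> B) = {}" "P (B - A) \<inter> P (A \<inter> B) = {}"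
    "P (A - B) \<inter> P (B - A) = {}" by (auto simp: P_def)
  ultimately show ?thesis unfolding P_def[symmetric] by (simp add: card_Un_disjoint fin)
qed

definition inversions :: "'n::linorder set \<Rightarrow> 'n set \<Rightarrow> nat" where
  "inversions A B = card {(a, b). a \<in> A \<and> b \<in> B \<and> b < a}"

lemma blade_sign_inversions: "blade_sign A B = (-1) ^ (inversions A B + card (A \<inter> B))"
  unfolding blade_sign_def inversions_def by simp

lemma inversions_symdiff_left:
  fixes A B C :: "'n::{finite,linorder} set"
  shows "inversions A C + inversions B C = inversions (symdiff A B) C + 2 * inversions (A \<inter> B) C"
proof -
  define S where "S = {(a::'n, b). b \<in> C \<and> b < a}"
  have "inversions X C = card {z\<in>S. fst z \<in> X}" for X
    unfolding inversions_def S_def by (rule arg_cong[of _ _ card]) auto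
  then show ?thesis by (simp only: card_filter_symdiff finite)
qed

lemma inversions_symdiff_right:
  fixes A B C :: "'n::{finite,linorder} set"
  shows "inversions C A + inversions C B = inversions C (symdiff A B) + 2 * inversions C (A \<inter> B)"
proof -
  define S where "S = {(a, b::'n). a \<in> C \<and> b < a}"
  have "inversions C X = card {z\<in>S. snd z \<in> X}" for X
    unfolding inversions_def S_def by (rule arg_cong[of _ _ card]) auto
  then show ?thesis by (simp only: card_filter_symdiff finite)
qed

lemma card_Int_symdiff:
  fixes A B C :: "'n::finite set"
  shows "card (C \<inter> A) + card (C \<inter> B) = card (C \<inter> symdiff A B) + 2 * card (C \<inter> (A \<inter> B))"
  using card_filter_symdiff[of C id A B] by (simp add: Int_def conj_commute)

lemma minus_one_power_add_eq:
  assumes "a + b = c + 2 * d"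
  shows "(-1::complex) ^ a * (-1) ^ b = (-1) ^ c"
  by (simp add: power_add[symmetric] assms) (simp add: power_add power_mult)

lemma blade_sign_symdiff_left:
  fixes A B C :: "'n::{finite,linorder} set"
  shows "blade_sign (symdiff A B) C = blade_sign A C * blade_sign B C"
proof -
  have "(inversions A C + card (A \<inter> C)) + (inversions B C + card (B \<inter> C)) =
     (inversions (symdiff A B) C + card (symdiff A B \<inter> C))
     + 2 * (inversions (A \<inter> B) C + card (A \<inter> B \<inter> C))"
    using inversions_symdiff_left[where A=A and B=B and C=C] card_Int_symdiff[of C A B]
    by (simp add: Int_commute)
  from minus_one_power_add_eq[OF this] show ?thesis unfolding blade_sign_inversions by simp
qed

lemma blade_sign_symdiff_right:
  fixes A B C :: "'n::{finite,linorder} set"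
  shows "blade_sign C (symdiff A B) = blade_sign C A * blade_sign C B"
proof -
  have "(inversions C A + card (C \<inter> A)) + (inversions C B + card (C \<inter> B)) =
     (inversions C (symdiff A B) + card (C \<inter> symdiff A B))
     + 2 * (inversions C (A \<inter> B) + card (C \<inter> (A \<inter> B)))"
    using inversions_symdiff_right[where A=A and B=B and C=C] card_Int_symdiff[of C A B] by simp
  from minus_one_power_add_eq[OF this] show ?thesis unfolding blade_sign_inversions by simp
qed

lemma blade_sign_square: "blade_sign A B * blade_sign A B = 1"
  unfolding blade_sign_def by (simp add: power_add[symmetric] mult_2[symmetric] power_mult)

lemma blade_sign_empty [simp]: "blade_sign {} A = 1" "blade_sign A {} = 1"
  unfolding blade_sign_def by simp_all

text \<open>Being bimultiplicative for symmetric difference, \<open>blade_sign\<close> is a 2-cocycle;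
  this is what makes \<open>\<otimes>\<^sub>c\<close> associative.\<close>

lemma blade_sign_cocycle:
  fixes A B C :: "'n::{finite,linorder} set"
  shows "blade_sign A B * blade_sign (symdiff A B) C = blade_sign A (symdiff B C) * blade_sign B C"
  by (simp add: blade_sign_symdiff_left blade_sign_symdiff_right)

lemma cl_mult_assoc:
  fixes x y z :: "'n::{finite,linorder} cl"
  shows "(x \<otimes>\<^sub>c y) \<otimes>\<^sub>c z = x \<otimes>\<^sub>c (y \<otimes>\<^sub>c z)"
proof
  fix D
  have "((x \<otimes>\<^sub>c y) \<otimes>\<^sub>c z) D = (\<Sum>A\<in>UNIV. \<Sum>C\<in>UNIV.
      blade_sign C (symdiff C D) * (blade_sign A (symdiff A C) * x A * y (symdiff A C))
      * z (symdiff C D))"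
    unfolding cl_mult_def[of "x \<otimes>\<^sub>c y"] unfolding cl_mult_def[of x y]
    by (simp add: sum_distrib_left sum_distrib_right) (rule sum.swap)
  also have "\<dots> = (\<Sum>A\<in>UNIV. \<Sum>B\<in>UNIV. blade_sign (symdiff A B) (symdiff (symdiff A B) D)
      * (blade_sign A B * x A * y B) * z (symdiff (symdiff A B) D))"
  proof (rule sum.cong[OF refl])
    fix A :: "'n set"
    show "(\<Sum>C\<in>UNIV. blade_sign C (symdiff C D) * (blade_sign A (symdiff A C) * x A * y (symdiff A C))
        * z (symdiff C D)) = (\<Sum>B\<in>UNIV. blade_sign (symdiff A B) (symdiff (symdiff A B) D)
        * (blade_sign A B * x A * y B) * z (symdiff (symdiff A B) D))"
      by (rule sum.reindex_bij_witness[of _ "symdiff A" "symdiff A"]) auto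
  qed
  also have "\<dots> = (\<Sum>A\<in>UNIV. \<Sum>B\<in>UNIV. blade_sign A (symdiff A D) * x A
      * (blade_sign B (symdiff B (symdiff A D)) * y B * z (symdiff B (symdiff A D))))"
  proof (intro sum.cong refl)
    fix A B :: "'n set"
    have e: "symdiff (symdiff A B) D = symdiff B (symdiff A D)" by blast
    have "blade_sign A B * blade_sign (symdiff A B) (symdiff B (symdiff A D))
        = blade_sign A (symdiff A D) * blade_sign B (symdiff B (symdiff A D))"
      using blade_sign_cocycle[of A B "symdiff B (symdiff A D)"] by simp
    then show "blade_sign (symdiff A B) (symdiff (symdiff A B) D) * (blade_sign A B * x A * y B)
        * z (symdiff (symdiff A B) D) = blade_sign A (symdiff A D) * x A
        * (blade_sign B (symdiff B (symdiff A D)) * y B * z (symdiff B (symdiff A D)))"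
      unfolding e by (simp add: algebra_simps)
  qed
  also have "\<dots> = (x \<otimes>\<^sub>c (y \<otimes>\<^sub>c z)) D"
    unfolding cl_mult_def[of x "y \<otimes>\<^sub>c z"] unfolding cl_mult_def[of y z]
    by (simp add: sum_distrib_left)
  finally show "((x \<otimes>\<^sub>c y) \<otimes>\<^sub>c z) D = (x \<otimes>\<^sub>c (y \<otimes>\<^sub>c z)) D" .
qed

definition cl_one :: "'n cl" where
  "cl_one = (\<lambda>A. if A = {} then 1 else 0)"

lemma cl_mult_one_right [simp]:
  fixes x :: "'n::{finite,linorder} cl"
  shows "x \<otimes>\<^sub>c cl_one = x"
proof
  fix C :: "'n set"
  have "\<And>A. (symdiff A C = {}) = (A = C)" by blast
  then show "(x \<otimes>\<^sub>c cl_one) C = x C" unfolding cl_mult_def cl_one_def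
    by (simp add: if_distrib[of "\<lambda>t. _ * t"] sum.delta' cong: if_cong)
qed

lemma cl_mult_one_left [simp]:
  fixes x :: "'n::{finite,linorder} cl"
  shows "cl_one \<otimes>\<^sub>c x = x"
  unfolding cl_mult_def cl_one_def
  by (simp add: if_distrib[of "\<lambda>t. t * _"] if_distrib[of "\<lambda>t. _ * t"] sum.delta cong: if_cong)

lemma cl_mult_add_right: "x \<otimes>\<^sub>c (y \<oplus>\<^sub>c z) = x \<otimes>\<^sub>c y \<oplus>\<^sub>c x \<otimes>\<^sub>c z"
  unfolding cl_mult_def cl_add_def by (simp add: algebra_simps sum.distrib)

lemma cl_mult_add_left: "(x \<oplus>\<^sub>c y) \<otimes>\<^sub>c z = x \<otimes>\<^sub>c z \<oplus>\<^sub>c y \<otimes>\<^sub>c z"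
  unfolding cl_mult_def cl_add_def by (simp add: algebra_simps sum.distrib)

lemma cl_mult_scale_left: "(c \<cdot>\<^sub>c x) \<otimes>\<^sub>c y = c \<cdot>\<^sub>c (x \<otimes>\<^sub>c y)"
  unfolding cl_mult_def cl_scale_def by (simp add: sum_distrib_left algebra_simps)

lemma cl_mult_scale_right: "x \<otimes>\<^sub>c (c \<cdot>\<^sub>c y) = c \<cdot>\<^sub>c (x \<otimes>\<^sub>c y)"
  unfolding cl_mult_def cl_scale_def by (simp add: sum_distrib_left algebra_simps)

text \<open>A type copy of \<open>cl\<close> carries the ring structure, so that identities in
  \<open>\<otimes>\<^sub>c\<close>, \<open>\<oplus>\<^sub>c\<close>, \<open>\<ominus>\<^sub>c\<close> can be transported by \<open>CL\<close> and proved with \<open>algebra_simps\<close>.\<close>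

typedef ('n::"{finite,linorder}") clifford = "UNIV :: 'n cl set"
  morphisms coeffs CL by simp

setup_lifting type_definition_clifford

instantiation clifford :: ("{finite,linorder}") ring_1
begin
lift_definition zero_clifford :: "'a clifford" is "\<lambda>_. 0" .
lift_definition one_clifford :: "'a clifford" is "cl_one" .
lift_definition plus_clifford :: "'a clifford \<Rightarrow> 'a clifford \<Rightarrow> 'a clifford" is "cl_add" .
lift_definition minus_clifford :: "'a clifford \<Rightarrow> 'a clifford \<Rightarrow> 'a clifford" is "cl_minus" .
lift_definition uminus_clifford :: "'a clifford \<Rightarrow> 'a clifford" is "\<lambda>x A. - x A" .
lift_definition times_clifford :: "'a clifford \<Rightarrow> 'a clifford \<Rightarrow> 'a clifford" is "cl_mult" .
instance
proof
  fix a b c :: "'a clifford"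
  show "a * b * c = a * (b * c)" by transfer (rule cl_mult_assoc)
  show "a + b + c = a + (b + c)" by transfer (auto simp: cl_add_def)
  show "a + b = b + a" by transfer (auto simp: cl_add_def)
  show "0 + a = a" by transfer (auto simp: cl_add_def)
  show "- a + a = 0" by transfer (auto simp: cl_add_def)
  show "a - b = a + - b" by transfer (auto simp: cl_add_def cl_minus_def)
  show "1 * a = a" by transfer simp
  show "a * 1 = a" by transfer simp
  show "(a + b) * c = a * c + b * c" by transfer (rule cl_mult_add_left)
  show "a * (b + c) = a * b + a * c" by transfer (rule cl_mult_add_right)
  show "(0::'a clifford) \<noteq> 1" by transfer (auto simp: cl_one_def fun_eq_iff)
qed
end

lemma CL_eq_iff: "CL x = CL y \<longleftrightarrow> x = y"
  by (simp add: CL_inject)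

lemma CL_add: "CL (x \<oplus>\<^sub>c y) = CL x + CL y"
  by (simp add: plus_clifford.abs_eq eq_onp_def)

lemma CL_minus: "CL (x \<ominus>\<^sub>c y) = CL x - CL y"
  by (simp add: minus_clifford.abs_eq eq_onp_def)

lemma CL_mult: "CL (x \<otimes>\<^sub>c y) = CL x * CL y"
  by (simp add: times_clifford.abs_eq eq_onp_def)

lemma CL_zero: "CL (\<lambda>_. 0) = 0"
  by (simp add: zero_clifford.abs_eq)

lemma CL_one: "CL cl_one = 1"
  by (simp add: one_clifford.abs_eq)

abbreviation E :: "'n::{finite,linorder} \<Rightarrow> 'n clifford" where
  "E j \<equiv> CL (cl_e j)"

lemma CL_sum: "finite I \<Longrightarrow> CL (cl_sum F I) = (\<Sum>i\<in>I. CL (F i))"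
proof (induction I rule: finite_induct)
  case empty
  then show ?case by (simp add: cl_sum_def CL_zero[symmetric])
next
  case (insert i I)
  then have "cl_sum F (insert i I) = F i \<oplus>\<^sub>c cl_sum F I"
    by (auto simp: cl_sum_def cl_add_def fun_eq_iff)
  then show ?case using insert by (simp add: CL_add)
qed

definition scalar :: "complex \<Rightarrow> 'n::{finite,linorder} clifford" where
  "scalar c = CL (c \<cdot>\<^sub>c cl_one)"

lemma CL_scale: "CL (c \<cdot>\<^sub>c x) = scalar c * CL x"
  unfolding scalar_def CL_mult[symmetric] by (simp add: cl_mult_scale_left)

lemma scalar_commute: "scalar c * y = y * scalar c"
proof -
  obtain x where y: "y = CL x" by (metis coeffs_inverse)
  show ?thesis unfolding y scalar_def CL_mult[symmetric] cl_mult_scale_left cl_mult_scale_right by simp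
qed

lemma scalar_add: "scalar (a + b) = scalar a + scalar b"
  unfolding scalar_def CL_add[symmetric] by (simp add: cl_scale_def cl_add_def fun_eq_iff algebra_simps)

lemma scalar_mult: "scalar (a * b) = scalar a * scalar b"
  unfolding scalar_def CL_mult[symmetric] cl_mult_scale_left cl_mult_scale_right
  by (simp add: cl_scale_def algebra_simps)

lemma scalar_zero: "scalar 0 = 0"
  unfolding scalar_def by (simp add: cl_scale_def CL_zero[symmetric])

lemma scalar_one: "scalar 1 = 1"
  unfolding scalar_def by (simp add: cl_scale_def CL_one)

lemma scalar_two: "scalar 2 = 2"
  using scalar_add[of 1 1] by (simp add: scalar_one)

lemma scalar_uminus: "scalar (- a) = - scalar a"
  by (rule minus_unique[symmetric]) (simp add: scalar_add[symmetric] scalar_zero)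

section \<open>Vectors and bivectors\<close>

lemma grade_coeff_eq_0: "grade k v = v \<Longrightarrow> card B \<noteq> k \<Longrightarrow> v B = 0"
  by (metis grade_def)

lemma grade_grade [simp]: "grade k (grade k v) = grade k v"
  unfolding grade_def by auto

lemma grade_cl_e: "grade 1 (cl_e j) = cl_e j"
  unfolding grade_def cl_e_def by (auto simp: fun_eq_iff)

lemma blade_sign_singletons: "blade_sign {j} {i} = (if j < i then 1 else -1)"
proof -
  have "{(a, b). a \<in> {j} \<and> b \<in> {i} \<and> b < a} = (if i < j then {(j, i)} else {})"
    by (auto split: if_splits)
  then show ?thesis unfolding blade_sign_def by auto
qed

lemma cl_e_mult_left:
  fixes v :: "'n::{finite,linorder} cl"
  shows "(cl_e j \<otimes>\<^sub>c v) C = blade_sign {j} (symdiff {j} C) * v (symdiff {j} C)"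
  unfolding cl_mult_def cl_e_def
  by (simp add: if_distrib[of "\<lambda>t. _ * t * _"] sum.delta cong: if_cong)

lemma cl_e_mult_right:
  fixes v :: "'n::{finite,linorder} cl"
  shows "(v \<otimes>\<^sub>c cl_e j) C = blade_sign (symdiff {j} C) {j} * v (symdiff {j} C)"
proof -
  have "(symdiff A C = {j}) = (A = symdiff {j} C)" for A by blast
  then show ?thesis unfolding cl_mult_def cl_e_def
    by (simp add: if_distrib[of "\<lambda>t. _ * t"] sum.delta' cong: if_cong)
qed

lemma vector_anticommute_cl_e:
  fixes v :: "'n::{finite,linorder} cl"
  assumes "grade 1 v = v"
  shows "E j * CL v + CL v * E j = - (2 * scalar (v {j}))"
proof -
  have "(cl_e j \<otimes>\<^sub>c v) \<oplus>\<^sub>c (v \<otimes>\<^sub>c cl_e j) = (- 2 * v {j}) \<cdot>\<^sub>c cl_one"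
  proof
    fix C :: "'n set"
    define B where "B = symdiff {j} C"
    have "blade_sign {j} B * v B + blade_sign B {j} * v B = (if C = {} then - 2 * v {j} else 0)"
    proof (cases "card B = 1")
      case False
      then have "v B = 0" "C \<noteq> {}" using grade_coeff_eq_0[OF assms] by (auto simp: B_def)
      then show ?thesis by simp
    next
      case True
      then obtain i where "B = {i}" by (rule card_1_singletonE)
      moreover have "C = {} \<longleftrightarrow> i = j" using \<open>B = {i}\<close> unfolding B_def by blast
      ultimately show ?thesis by (auto simp: blade_sign_singletons)
    qed
    then show "((cl_e j \<otimes>\<^sub>c v) \<oplus>\<^sub>c (v \<otimes>\<^sub>c cl_e j)) C = ((- 2 * v {j}) \<cdot>\<^sub>c cl_one) C"
      unfolding cl_add_def cl_e_mult_left cl_e_mult_right cl_scale_def cl_one_def B_def by simp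
  qed
  then have "E j * CL v + CL v * E j = scalar (- 2 * v {j})"
    by (metis CL_add CL_mult CL_scale CL_one mult.right_neutral)
  then show ?thesis by (simp add: scalar_mult scalar_uminus scalar_two)
qed

lemma card_inversions_singleton_left:
  fixes B :: "'n::{finite,linorder} set"
  shows "card {(a, b). a \<in> {k} \<and> b \<in> B \<and> b < a} = card {b\<in>B. b < k}"
proof -
  have "{(a, b). a \<in> {k} \<and> b \<in> B \<and> b < a} = (\<lambda>b. (k, b)) ` {b\<in>B. b < k}" by auto
  then show ?thesis by (simp add: card_image inj_on_def)
qed

lemma card_inversions_singleton_right:
  fixes B :: "'n::{finite,linorder} set"
  shows "card {(a, b). a \<in> B \<and> b \<in> {k} \<and> b < a} = card {b\<in>B. k < b}"
proof -
  have "{(a, b). a \<in> B \<and> b \<in> {k} \<and> b < a} = (\<lambda>a. (a, k)) ` {b\<in>B. k < b}" by auto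
  then show ?thesis by (simp add: card_image inj_on_def)
qed

lemma card_split_around:
  fixes B :: "'n::{finite,linorder} set"
  shows "card {b\<in>B. b < k} + card {b\<in>B. k < b} + card (B \<inter> {k}) = card B"
proof -
  have "B = ({b\<in>B. b < k} \<union> {b\<in>B. k < b}) \<union> (B \<inter> {k})" by auto
  moreover have "({b\<in>B. b < k} \<union> {b\<in>B. k < b}) \<inter> (B \<inter> {k}) = {}"
    "{b\<in>B. b < k} \<inter> {b\<in>B. k < b} = {}" by auto
  ultimately show ?thesis by (metis card_Un_disjoint finite)
qed

lemma blade_sign_swap_singleton:
  fixes B :: "'n::{finite,linorder} set"
  shows "blade_sign B {k} = blade_sign {k} B * (-1) ^ (card B + card (B \<inter> {k}))"
proof -
  have "{k} \<inter> B = B \<inter> {k}" by auto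
  then have "blade_sign {k} B * blade_sign B {k} = (-1) ^ (card B + card (B \<inter> {k}))"
    unfolding blade_sign_def card_inversions_singleton_left card_inversions_singleton_right
    using card_split_around[of B k] by (simp add: power_add[symmetric] algebra_simps)
  then have "blade_sign {k} B * (blade_sign {k} B * blade_sign B {k})
      = blade_sign {k} B * (-1) ^ (card B + card (B \<inter> {k}))"
    by simp
  then show ?thesis by (simp add: mult.assoc[symmetric] blade_sign_square)
qed

text \<open>The grade-3 parts of \<open>e\<^sub>k b\<close> and \<open>b e\<^sub>k\<close> cancel, their grade-1 parts are opposite.\<close>

lemma bivector_commutator_cl_e:
  fixes b :: "'n::{finite,linorder} cl"
  assumes "grade 2 b = b"
  shows "E k * CL b - CL b * E k = 2 * CL (grade 1 (cl_e k \<otimes>\<^sub>c b))"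
proof -
  have "(cl_e k \<otimes>\<^sub>c b) \<ominus>\<^sub>c (b \<otimes>\<^sub>c cl_e k) = 2 \<cdot>\<^sub>c grade 1 (cl_e k \<otimes>\<^sub>c b)"
  proof
    fix C :: "'n set"
    define B where "B = symdiff {k} C"
    have C: "C = symdiff {k} B" unfolding B_def by simp
    have "blade_sign {k} B * b B - blade_sign {k} B * (-1) ^ (card B + card (B \<inter> {k})) * b B
        = (if card C = 1 then 2 * (blade_sign {k} B * b B) else 0)"
    proof (cases "card B = 2")
      case False
      then show ?thesis using grade_coeff_eq_0[OF assms] by simp
    next
      case True
      show ?thesis
      proof (cases "k \<in> B")
        case True
        then have "C = B - {k}" "B \<inter> {k} = {k}" using C by auto
        then show ?thesis using \<open>card B = 2\<close> True by simp
      next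
        case False
        then have "C = insert k B" "B \<inter> {k} = {}" using C by auto
        then show ?thesis using \<open>card B = 2\<close> False by simp
      qed
    qed
    then show "((cl_e k \<otimes>\<^sub>c b) \<ominus>\<^sub>c (b \<otimes>\<^sub>c cl_e k)) C = (2 \<cdot>\<^sub>c grade 1 (cl_e k \<otimes>\<^sub>c b)) C"
      unfolding cl_minus_def cl_scale_def grade_def cl_e_mult_left cl_e_mult_right
        B_def[symmetric] blade_sign_swap_singleton by simp
  qed
  then show ?thesis by (metis CL_minus CL_mult CL_scale scalar_two)
qed

lemma vector_mult_grade_0_2:
  fixes a c :: "'n::{finite,linorder} cl"
  assumes "grade 1 a = a" "grade 1 c = c" "card C \<noteq> 0" "card C \<noteq> 2"
  shows "(a \<otimes>\<^sub>c c) C = 0"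
  unfolding cl_mult_def
proof (rule sum.neutral, intro ballI)
  fix A :: "'n set"
  show "blade_sign A (symdiff A C) * a A * c (symdiff A C) = 0"
  proof (cases "card A = 1 \<and> card (symdiff A C) = 1")
    case True
    then obtain p q where "A = {p}" "symdiff A C = {q}" by (meson card_1_singletonE)
    then have "C = symdiff {p} {q}" by blast
    then have "card C = 0 \<or> card C = 2" by (cases "p = q") auto
    then show ?thesis using assms by auto
  next
    case False
    then show ?thesis using grade_coeff_eq_0[OF assms(1)] grade_coeff_eq_0[OF assms(2)] by auto
  qed
qed

lemma grade_0_add_grade_2:
  assumes "\<And>C. card C \<noteq> 0 \<Longrightarrow> card C \<noteq> 2 \<Longrightarrow> h C = 0"
  shows "grade 0 h \<oplus>\<^sub>c grade 2 h = h"
  using assms unfolding grade_def cl_add_def by (auto simp: fun_eq_iff)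

lemma grade_2_grade_0_add_grade_2: "grade 2 (grade 0 a \<oplus>\<^sub>c grade 2 a) = grade 2 a"
  unfolding grade_def cl_add_def by auto

lemma CL_grade_0: "CL (grade 0 h) = scalar (h {})"
proof -
  have "grade 0 h = h {} \<cdot>\<^sub>c cl_one"
    unfolding grade_def cl_scale_def cl_one_def by (auto simp: fun_eq_iff)
  then show ?thesis by (simp add: CL_scale CL_one)
qed

lemma commutator_cl_e_grade_0_2:
  assumes "grade 0 a \<oplus>\<^sub>c grade 2 a = a"
  shows "E k * CL a - CL a * E k = 2 * CL (grade 1 (cl_e k \<otimes>\<^sub>c grade 2 a))"
proof -
  have "CL a = scalar (a {}) + CL (grade 2 a)"
    using assms by (metis CL_add CL_grade_0)
  then have "E k * CL a - CL a * E k = E k * CL (grade 2 a) - CL (grade 2 a) * E k"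
    by (simp add: algebra_simps scalar_commute)
  then show ?thesis by (simp add: bivector_commutator_cl_e)
qed

section \<open>Partial derivatives and smooth functions\<close>

lemma has_vector_derivative_pd:
  fixes F :: "(real, 'n::finite) vec \<Rightarrow> complex"
  assumes "F differentiable (at x)"
  shows "((\<lambda>t. F (x + t *\<^sub>R axis j 1)) has_vector_derivative pd j F x) (at 0)"
proof -
  have "(\<lambda>t::real. x + t *\<^sub>R axis j 1) differentiable (at 0)"
    by (intro derivative_intros)
  from differentiable_chain_at[OF this] assms
  have "(\<lambda>t. F (x + t *\<^sub>R axis j 1)) differentiable (at 0)" by (simp add: o_def)
  then show ?thesis unfolding pd_def by (simp add: vector_derivative_works[symmetric])
qed

lemma pd_cong_open:
  fixes F G :: "(real, 'n::finite) vec \<Rightarrow> complex"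
  assumes "open \<Omega>" "x \<in> \<Omega>" "\<And>y. y \<in> \<Omega> \<Longrightarrow> F y = G y"
  shows "pd j F x = pd j G x"
proof -
  have "((\<lambda>t::real. x + t *\<^sub>R axis j 1) \<longlongrightarrow> x + 0 *\<^sub>R axis j 1) (nhds 0)"
    by (intro tendsto_add tendsto_const tendsto_scaleR filterlim_ident)
  then have "eventually (\<lambda>t. x + t *\<^sub>R axis j 1 \<in> \<Omega>) (nhds (0::real))"
    using topological_tendstoD assms(1,2) by fastforce
  then have "eventually (\<lambda>t. t \<in> UNIV \<longrightarrow> F (x + t *\<^sub>R axis j 1) = G (x + t *\<^sub>R axis j 1)) (nhds 0)"
    by (rule eventually_mono) (simp add: assms(3))
  then show ?thesis unfolding pd_def
    by (rule vector_derivative_cong_eq) simp_all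
qed

lemma pd_add:
  assumes "F differentiable (at x)" "G differentiable (at x)"
  shows "pd j (\<lambda>y. F y + G y) x = pd j F x + pd j G x"
  unfolding pd_def[of j "\<lambda>y. F y + G y"]
  by (intro vector_derivative_at has_vector_derivative_add has_vector_derivative_pd assms)

lemma pd_diff:
  assumes "F differentiable (at x)" "G differentiable (at x)"
  shows "pd j (\<lambda>y. F y - G y) x = pd j F x - pd j G x"
  unfolding pd_def[of j "\<lambda>y. F y - G y"]
  by (intro vector_derivative_at has_vector_derivative_diff has_vector_derivative_pd assms)

lemma pd_mult:
  assumes "F differentiable (at x)" "G differentiable (at x)"
  shows "pd j (\<lambda>y. F y * G y) x = pd j F x * G x + F x * pd j G x"
proof -
  have "((\<lambda>t. F (x + t *\<^sub>R axis j 1) * G (x + t *\<^sub>R axis j 1)) has_vector_derivative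
     (F (x + 0 *\<^sub>R axis j 1) * pd j G x + pd j F x * G (x + 0 *\<^sub>R axis j 1))) (at 0)"
    by (intro has_vector_derivative_mult has_vector_derivative_pd assms)
  then show ?thesis unfolding pd_def[of j "\<lambda>y. F y * G y"]
    by (subst vector_derivative_at) (auto simp: pd_def algebra_simps)
qed

lemma pd_const: "pd j (\<lambda>y. c) x = 0"
  unfolding pd_def by (rule vector_derivative_at) simp

lemma pd_cmult: "F differentiable (at x) \<Longrightarrow> pd j (\<lambda>y. c * F y) x = c * pd j F x"
  using pd_mult[of "\<lambda>y. c" x F j] by (simp add: pd_const)

lemma pd_sum:
  assumes "finite I" "\<And>i. i \<in> I \<Longrightarrow> F i differentiable (at x)"
  shows "pd j (\<lambda>y. \<Sum>i\<in>I. F i y) x = (\<Sum>i\<in>I. pd j (F i) x)"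
  unfolding pd_def[of j "\<lambda>y. \<Sum>i\<in>I. F i y"]
  by (rule vector_derivative_at, rule has_vector_derivative_sum)
    (use has_vector_derivative_pd assms in auto)

lemma ipd_append_singleton: "ipd (js @ [j]) F = ipd js (pd j F)"
  by (induction js) simp_all

lemma ipd_cong_open:
  assumes "open \<Omega>" "\<And>y. y \<in> \<Omega> \<Longrightarrow> F y = G y" "y \<in> \<Omega>"
  shows "ipd js F y = ipd js G y"
  using assms(3)
proof (induction js arbitrary: y)
  case Nil
  then show ?case using assms by simp
next
  case (Cons j js)
  have "pd j (ipd js F) y = pd j (ipd js G) y"
    by (rule pd_cong_open[OF assms(1) Cons.prems]) (rule Cons.IH)
  then show ?case by simp
qed

lemma differentiable_on_congI:
  assumes "F differentiable_on S" "\<And>y. y \<in> S \<Longrightarrow> F y = G y"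
  shows "G differentiable_on S"
  unfolding differentiable_on_def
proof
  fix x
  assume "x \<in> S"
  show "G differentiable (at x within S)"
    by (rule differentiable_transform_within[of F x S 1])
      (use assms \<open>x \<in> S\<close> in \<open>auto simp: differentiable_on_def\<close>)
qed

lemma smooth_on_imp_differentiable_on: "smooth_on \<Omega> F \<Longrightarrow> F differentiable_on \<Omega>"
proof -
  assume "smooth_on \<Omega> F"
  then have "ipd [] F differentiable_on \<Omega>" unfolding smooth_on_def by blast
  then show ?thesis by simp
qed

lemma smooth_on_imp_differentiable_at:
  assumes "open \<Omega>" "smooth_on \<Omega> F" "x \<in> \<Omega>"
  shows "F differentiable (at x)"
  using smooth_on_imp_differentiable_on[OF assms(2)] assms(1,3)
  by (simp add: differentiable_on_eq_differentiable_at)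

lemma smooth_on_pd: "smooth_on \<Omega> F \<Longrightarrow> smooth_on \<Omega> (pd j F)"
  unfolding smooth_on_def by (metis ipd_append_singleton)

lemma smooth_on_const: "smooth_on \<Omega> (\<lambda>y. c)"
proof -
  have ipd_const: "ipd js (\<lambda>y. c) = (if js = [] then (\<lambda>y. c) else (\<lambda>y. 0))" for js
  proof (induction js)
    case (Cons j js)
    have "pd j (ipd js (\<lambda>y. c)) = (\<lambda>y. 0)"
      by (rule ext, cases "js = []") (simp_all add: Cons.IH pd_const)
    then show ?case by simp
  qed simp
  show ?thesis unfolding smooth_on_def
  proof
    fix js :: "'a list"
    show "ipd js (\<lambda>y. c) differentiable_on \<Omega>" by (cases "js = []") (simp_all add: ipd_const)
  qed
qed

text \<open>Closure under products needs an induction on the number of derivatives that are required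
  to be differentiable.\<close>

definition differentiable_up_to ::
    "(real, 'n::finite) vec set \<Rightarrow> nat \<Rightarrow> ((real, 'n) vec \<Rightarrow> complex) \<Rightarrow> bool" where
  "differentiable_up_to \<Omega> m F \<longleftrightarrow> (\<forall>js. length js \<le> m \<longrightarrow> ipd js F differentiable_on \<Omega>)"

lemma smooth_on_iff_differentiable_up_to: "smooth_on \<Omega> F \<longleftrightarrow> (\<forall>m. differentiable_up_to \<Omega> m F)"
  unfolding smooth_on_def differentiable_up_to_def by (meson order_refl)

lemma ipd_add:
  assumes "open \<Omega>" "differentiable_up_to \<Omega> m F" "differentiable_up_to \<Omega> m G"
  shows "length js \<le> Suc m \<Longrightarrow> y \<in> \<Omega> \<Longrightarrow> ipd js (\<lambda>y. F y + G y) y = ipd js F y + ipd js G y"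
proof (induction js arbitrary: y)
  case Nil
  then show ?case by simp
next
  case (Cons j js)
  have l: "length js \<le> m" using Cons.prems by simp
  have "ipd (j # js) (\<lambda>y. F y + G y) y = pd j (ipd js (\<lambda>y. F y + G y)) y" by simp
  also have "\<dots> = pd j (\<lambda>y. ipd js F y + ipd js G y) y"
    by (rule pd_cong_open[OF assms(1) Cons.prems(2)]) (use Cons.IH l in simp)
  also have "\<dots> = pd j (ipd js F) y + pd j (ipd js G) y"
  proof (rule pd_add)
    have "ipd js F differentiable_on \<Omega>" "ipd js G differentiable_on \<Omega>"
      using assms(2,3) l by (simp_all add: differentiable_up_to_def)
    then show "ipd js F differentiable (at y)" "ipd js G differentiable (at y)"
      using Cons.prems(2) by (simp_all add: differentiable_on_eq_differentiable_at[OF assms(1)])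
  qed
  finally show ?case by simp
qed

lemma differentiable_up_to_add:
  assumes "open \<Omega>" "differentiable_up_to \<Omega> m F" "differentiable_up_to \<Omega> m G"
  shows "differentiable_up_to \<Omega> m (\<lambda>y. F y + G y)"
  unfolding differentiable_up_to_def
proof (intro allI impI)
  fix js :: "'a list"
  assume "length js \<le> m"
  then have "(\<lambda>y. ipd js F y + ipd js G y) differentiable_on \<Omega>"
    using assms by (auto simp: differentiable_up_to_def intro!: differentiable_on_add)
  then show "ipd js (\<lambda>y. F y + G y) differentiable_on \<Omega>"
    by (rule differentiable_on_congI) (metis ipd_add[OF assms] le_SucI \<open>length js \<le> m\<close>)
qed

lemma smooth_on_add: "open \<Omega> \<Longrightarrow> smooth_on \<Omega> F \<Longrightarrow> smooth_on \<Omega> G \<Longrightarrow> smooth_on \<Omega> (\<lambda>y. F y + G y)"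
  unfolding smooth_on_iff_differentiable_up_to using differentiable_up_to_add by blast

lemma differentiable_up_to_mult:
  assumes "open \<Omega>" "smooth_on \<Omega> F" "smooth_on \<Omega> G"
  shows "differentiable_up_to \<Omega> m (\<lambda>y. F y * G y)"
  using assms(2,3)
proof (induction m arbitrary: F G)
  case 0
  then show ?case by (auto simp: differentiable_up_to_def smooth_on_imp_differentiable_on)
next
  case (Suc m)
  show ?case unfolding differentiable_up_to_def
  proof (intro allI impI)
    fix js :: "'a list"
    assume "length js \<le> Suc m"
    show "ipd js (\<lambda>y. F y * G y) differentiable_on \<Omega>"
    proof (cases js rule: rev_exhaust)
      case Nil
      then show ?thesis using Suc.prems by (simp add: smooth_on_imp_differentiable_on)
    next
      case (snoc js' j)
      then have "length js' \<le> m" using \<open>length js \<le> Suc m\<close> by simp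
      have D1: "differentiable_up_to \<Omega> m (\<lambda>y. pd j F y * G y)"
        and D2: "differentiable_up_to \<Omega> m (\<lambda>y. F y * pd j G y)"
        using Suc.IH Suc.prems smooth_on_pd by blast+
      have eq: "ipd js (\<lambda>y. F y * G y) y
          = ipd js' (\<lambda>y. pd j F y * G y) y + ipd js' (\<lambda>y. F y * pd j G y) y"
        if "y \<in> \<Omega>" for y
      proof -
        have "pd j (\<lambda>y. F y * G y) z = pd j F z * G z + F z * pd j G z" if "z \<in> \<Omega>" for z
          using smooth_on_imp_differentiable_at[OF assms(1)] Suc.prems that by (simp add: pd_mult)
        then have "ipd js (\<lambda>y. F y * G y) y = ipd js' (\<lambda>y. pd j F y * G y + F y * pd j G y) y"
          unfolding snoc ipd_append_singleton by (rule ipd_cong_open[OF assms(1) _ that])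
        also have "\<dots> = ipd js' (\<lambda>y. pd j F y * G y) y + ipd js' (\<lambda>y. F y * pd j G y) y"
          by (rule ipd_add[OF assms(1) D1 D2]) (use \<open>length js' \<le> m\<close> that in auto)
        finally show ?thesis .
      qed
      have "(\<lambda>y. ipd js' (\<lambda>y. pd j F y * G y) y + ipd js' (\<lambda>y. F y * pd j G y) y) differentiable_on \<Omega>"
        using D1 D2 \<open>length js' \<le> m\<close>
        by (auto simp: differentiable_up_to_def intro!: differentiable_on_add)
      then show ?thesis by (rule differentiable_on_congI) (simp add: eq)
    qed
  qed
qed

lemma smooth_on_mult: "open \<Omega> \<Longrightarrow> smooth_on \<Omega> F \<Longrightarrow> smooth_on \<Omega> G \<Longrightarrow> smooth_on \<Omega> (\<lambda>y. F y * G y)"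
  by (simp add: smooth_on_iff_differentiable_up_to differentiable_up_to_mult)

lemma smooth_on_sum:
  assumes "open \<Omega>" "finite I" "\<And>i. i \<in> I \<Longrightarrow> smooth_on \<Omega> (F i)"
  shows "smooth_on \<Omega> (\<lambda>y. \<Sum>i\<in>I. F i y)"
  using assms(2,3)
  by (induction I rule: finite_induct) (simp_all add: smooth_on_const smooth_on_add assms(1))

lemma smooth_on_diff: "open \<Omega> \<Longrightarrow> smooth_on \<Omega> F \<Longrightarrow> smooth_on \<Omega> G \<Longrightarrow> smooth_on \<Omega> (\<lambda>y. F y - G y)"
proof -
  assume "open \<Omega>" "smooth_on \<Omega> F" "smooth_on \<Omega> G"
  then have "smooth_on \<Omega> (\<lambda>y. F y + (-1) * G y)" by (intro smooth_on_add smooth_on_mult smooth_on_const)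
  then show ?thesis by simp
qed

lemma smooth_on_cmult: "open \<Omega> \<Longrightarrow> smooth_on \<Omega> F \<Longrightarrow> smooth_on \<Omega> (\<lambda>y. c * F y)"
  using smooth_on_mult[OF _ smooth_on_const] .

section \<open>Calculus of Clifford-valued functions\<close>

context
  fixes \<Omega> :: "(real, 'n::{finite,linorder}) vec set"
  assumes open_\<Omega>: "open \<Omega>"
begin

lemma cl_smooth_on_add: "cl_smooth_on \<Omega> F \<Longrightarrow> cl_smooth_on \<Omega> G \<Longrightarrow> cl_smooth_on \<Omega> (\<lambda>y. F y \<oplus>\<^sub>c G y)"
  unfolding cl_smooth_on_def cl_add_def by (simp add: smooth_on_add open_\<Omega>)

lemma cl_smooth_on_minus: "cl_smooth_on \<Omega> F \<Longrightarrow> cl_smooth_on \<Omega> G \<Longrightarrow> cl_smooth_on \<Omega> (\<lambda>y. F y \<ominus>\<^sub>c G y)"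
  unfolding cl_smooth_on_def cl_minus_def by (simp add: smooth_on_diff open_\<Omega>)

lemma cl_smooth_on_scale: "cl_smooth_on \<Omega> F \<Longrightarrow> cl_smooth_on \<Omega> (\<lambda>y. c \<cdot>\<^sub>c F y)"
  unfolding cl_smooth_on_def cl_scale_def by (simp add: smooth_on_cmult open_\<Omega>)

lemma cl_smooth_on_coeff_scale:
  "cl_smooth_on \<Omega> F \<Longrightarrow> cl_smooth_on \<Omega> G \<Longrightarrow> cl_smooth_on \<Omega> (\<lambda>y. F y B \<cdot>\<^sub>c G y)"
  unfolding cl_smooth_on_def cl_scale_def by (simp add: smooth_on_mult open_\<Omega>)

lemma cl_smooth_on_const: "cl_smooth_on \<Omega> (\<lambda>y. K)"
  unfolding cl_smooth_on_def by (simp add: smooth_on_const)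

lemma cl_smooth_on_mult: "cl_smooth_on \<Omega> F \<Longrightarrow> cl_smooth_on \<Omega> G \<Longrightarrow> cl_smooth_on \<Omega> (\<lambda>y. F y \<otimes>\<^sub>c G y)"
  unfolding cl_smooth_on_def cl_mult_def
  by (auto intro!: smooth_on_sum open_\<Omega> smooth_on_mult[OF open_\<Omega>] smooth_on_const)

lemma cl_smooth_on_sum:
  "finite I \<Longrightarrow> (\<And>i. i \<in> I \<Longrightarrow> cl_smooth_on \<Omega> (F i)) \<Longrightarrow> cl_smooth_on \<Omega> (\<lambda>y. cl_sum (\<lambda>i. F i y) I)"
  unfolding cl_smooth_on_def cl_sum_def by (auto intro!: smooth_on_sum open_\<Omega>)

lemma cl_smooth_on_cl_pd: "cl_smooth_on \<Omega> F \<Longrightarrow> cl_smooth_on \<Omega> (cl_pd j F)"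
proof -
  have "(\<lambda>y. cl_pd j F y A) = pd j (\<lambda>y. F y A)" for A unfolding cl_pd_def by simp
  then show "cl_smooth_on \<Omega> F \<Longrightarrow> cl_smooth_on \<Omega> (cl_pd j F)"
    unfolding cl_smooth_on_def by (simp add: smooth_on_pd)
qed

lemma cl_smooth_on_dirac: "cl_smooth_on \<Omega> F \<Longrightarrow> cl_smooth_on \<Omega> (dirac F)"
proof -
  have "dirac F = (\<lambda>y. cl_sum (\<lambda>j. cl_e j \<otimes>\<^sub>c cl_pd j F y) UNIV)"
    unfolding dirac_def by simp
  then show "cl_smooth_on \<Omega> F \<Longrightarrow> cl_smooth_on \<Omega> (dirac F)"
    by (simp add: cl_smooth_on_sum cl_smooth_on_mult cl_smooth_on_const cl_smooth_on_cl_pd)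
qed

lemma cl_smooth_on_differentiable:
  "cl_smooth_on \<Omega> F \<Longrightarrow> x \<in> \<Omega> \<Longrightarrow> (\<lambda>y. F y A) differentiable (at x)"
  unfolding cl_smooth_on_def using smooth_on_imp_differentiable_at open_\<Omega> by blast

lemma cl_pd_add: "cl_smooth_on \<Omega> F \<Longrightarrow> cl_smooth_on \<Omega> G \<Longrightarrow> x \<in> \<Omega> \<Longrightarrow>
    cl_pd j (\<lambda>y. F y \<oplus>\<^sub>c G y) x = cl_pd j F x \<oplus>\<^sub>c cl_pd j G x"
  unfolding cl_pd_def cl_add_def by (simp add: pd_add cl_smooth_on_differentiable)

lemma cl_pd_minus: "cl_smooth_on \<Omega> F \<Longrightarrow> cl_smooth_on \<Omega> G \<Longrightarrow> x \<in> \<Omega> \<Longrightarrow>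
    cl_pd j (\<lambda>y. F y \<ominus>\<^sub>c G y) x = cl_pd j F x \<ominus>\<^sub>c cl_pd j G x"
  unfolding cl_pd_def cl_minus_def by (simp add: pd_diff cl_smooth_on_differentiable)

lemma cl_pd_scale: "cl_smooth_on \<Omega> F \<Longrightarrow> x \<in> \<Omega> \<Longrightarrow>
    cl_pd j (\<lambda>y. c \<cdot>\<^sub>c F y) x = c \<cdot>\<^sub>c cl_pd j F x"
  unfolding cl_pd_def cl_scale_def by (simp add: pd_cmult cl_smooth_on_differentiable)

lemma cl_pd_coeff_scale: "cl_smooth_on \<Omega> F \<Longrightarrow> cl_smooth_on \<Omega> G \<Longrightarrow> x \<in> \<Omega> \<Longrightarrow>
    cl_pd j (\<lambda>y. F y B \<cdot>\<^sub>c G y) x = (cl_pd j F x B \<cdot>\<^sub>c G x) \<oplus>\<^sub>c (F x B \<cdot>\<^sub>c cl_pd j G x)"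
  unfolding cl_pd_def cl_scale_def cl_add_def
  by (simp add: fun_eq_iff pd_mult cl_smooth_on_differentiable)

lemma cl_pd_sum: "finite I \<Longrightarrow> (\<And>i. i \<in> I \<Longrightarrow> cl_smooth_on \<Omega> (F i)) \<Longrightarrow> x \<in> \<Omega> \<Longrightarrow>
    cl_pd j (\<lambda>y. cl_sum (\<lambda>i. F i y) I) x = cl_sum (\<lambda>i. cl_pd j (F i) x) I"
  unfolding cl_pd_def cl_sum_def by (auto simp: fun_eq_iff intro!: pd_sum cl_smooth_on_differentiable)

lemma cl_pd_mult:
  assumes "cl_smooth_on \<Omega> F" "cl_smooth_on \<Omega> G" "x \<in> \<Omega>"
  shows "cl_pd j (\<lambda>y. F y \<otimes>\<^sub>c G y) x = (cl_pd j F x \<otimes>\<^sub>c G x) \<oplus>\<^sub>c (F x \<otimes>\<^sub>c cl_pd j G x)"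
proof
  fix C :: "'n set"
  let ?s = "\<lambda>A. blade_sign A (symdiff A C)"
  have dF: "(\<lambda>y. F y A) differentiable (at x)" and dG: "(\<lambda>y. G y A) differentiable (at x)" for A
    using cl_smooth_on_differentiable assms by blast+
  have "cl_pd j (\<lambda>y. F y \<otimes>\<^sub>c G y) x C = (\<Sum>A\<in>UNIV. pd j (\<lambda>y. ?s A * (F y A * G y (symdiff A C))) x)"
    unfolding cl_pd_def cl_mult_def mult.assoc using dF dG
    by (intro pd_sum) (auto intro!: derivative_intros)
  also have "\<dots> = (\<Sum>A\<in>UNIV. ?s A * (pd j (\<lambda>y. F y A) x * G x (symdiff A C)
      + F x A * pd j (\<lambda>y. G y (symdiff A C)) x))"
    using dF dG by (simp add: pd_cmult pd_mult differentiable_mult)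
  also have "\<dots> = ((cl_pd j F x \<otimes>\<^sub>c G x) \<oplus>\<^sub>c (F x \<otimes>\<^sub>c cl_pd j G x)) C"
    unfolding cl_add_def cl_mult_def cl_pd_def by (simp add: algebra_simps sum.distrib)
  finally show "cl_pd j (\<lambda>y. F y \<otimes>\<^sub>c G y) x C = ((cl_pd j F x \<otimes>\<^sub>c G x) \<oplus>\<^sub>c (F x \<otimes>\<^sub>c cl_pd j G x)) C" .
qed

lemma cl_pd_cong: "x \<in> \<Omega> \<Longrightarrow> (\<And>y. y \<in> \<Omega> \<Longrightarrow> F y = G y) \<Longrightarrow> cl_pd j F x = cl_pd j G x"
  unfolding cl_pd_def by (auto simp: fun_eq_iff intro!: pd_cong_open[OF open_\<Omega>])

lemma dirac_cong: "x \<in> \<Omega> \<Longrightarrow> (\<And>y. y \<in> \<Omega> \<Longrightarrow> F y = G y) \<Longrightarrow> dirac F x = dirac G x"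
  unfolding dirac_def using cl_pd_cong by metis

lemma dirac_tw_locally_zero:
  assumes "x \<in> \<Omega>" "\<And>y. y \<in> \<Omega> \<Longrightarrow> F y = (\<lambda>_. 0)"
  shows "dirac_tw f F x = (\<lambda>_. 0)"
proof -
  have "dirac F x = dirac (\<lambda>_ _. 0) x"
    by (rule dirac_cong[OF assms])
  then show ?thesis
    by (simp add: dirac_tw_def assms dirac_def cl_pd_def pd_const cl_mult_def cl_minus_def cl_sum_def)
qed

lemma grade_cl_pd:
  assumes "\<And>y. y \<in> \<Omega> \<Longrightarrow> grade k (F y) = F y" "x \<in> \<Omega>"
  shows "grade k (cl_pd j F x) = cl_pd j F x"
proof
  fix A :: "'n set"
  show "grade k (cl_pd j F x) A = cl_pd j F x A"
  proof (cases "card A = k")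
    case False
    have "cl_pd j F x A = pd j (\<lambda>y. 0) x"
      unfolding cl_pd_def using assms grade_coeff_eq_0[OF assms(1) False]
      by (auto intro: pd_cong_open[OF open_\<Omega>])
    then show ?thesis using False by (simp add: grade_def pd_const)
  qed (simp add: grade_def)
qed

end

lemma CL_dirac: "CL (dirac F x) = (\<Sum>j\<in>UNIV. E j * CL (cl_pd j F x))"
  unfolding dirac_def by (simp add: CL_sum CL_mult)

context
  fixes \<Omega> :: "(real, 'n::{finite,linorder}) vec set"
  assumes open_\<Omega>: "open \<Omega>"
begin

lemma CL_pd_minus: "cl_smooth_on \<Omega> F \<Longrightarrow> cl_smooth_on \<Omega> G \<Longrightarrow> x \<in> \<Omega> \<Longrightarrow>
    CL (cl_pd j (\<lambda>y. F y \<ominus>\<^sub>c G y) x) = CL (cl_pd j F x) - CL (cl_pd j G x)"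
  by (simp add: cl_pd_minus[OF open_\<Omega>] CL_minus)

lemma CL_pd_mult: "cl_smooth_on \<Omega> F \<Longrightarrow> cl_smooth_on \<Omega> G \<Longrightarrow> x \<in> \<Omega> \<Longrightarrow>
    CL (cl_pd j (\<lambda>y. F y \<otimes>\<^sub>c G y) x) = CL (cl_pd j F x) * CL (G x) + CL (F x) * CL (cl_pd j G x)"
  by (simp add: cl_pd_mult[OF open_\<Omega>] CL_add CL_mult)

lemma CL_pd_const: "CL (cl_pd j (\<lambda>y. K) x) = 0"
  by (simp add: cl_pd_def pd_const CL_zero)

lemma CL_pd_sum: "finite I \<Longrightarrow> (\<And>i. i \<in> I \<Longrightarrow> cl_smooth_on \<Omega> (F i)) \<Longrightarrow> x \<in> \<Omega> \<Longrightarrow>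
    CL (cl_pd j (\<lambda>y. cl_sum (\<lambda>i. F i y) I) x) = (\<Sum>i\<in>I. CL (cl_pd j (F i) x))"
  by (simp add: cl_pd_sum[OF open_\<Omega>] CL_sum)

lemma CL_pd_coeff_scale: "cl_smooth_on \<Omega> F \<Longrightarrow> cl_smooth_on \<Omega> G \<Longrightarrow> x \<in> \<Omega> \<Longrightarrow>
    CL (cl_pd j (\<lambda>y. F y B \<cdot>\<^sub>c G y) x)
      = scalar (cl_pd j F x B) * CL (G x) + scalar (F x B) * CL (cl_pd j G x)"
  by (simp add: cl_pd_coeff_scale[OF open_\<Omega>] CL_add CL_scale)

lemma CL_dirac_add: "cl_smooth_on \<Omega> F \<Longrightarrow> cl_smooth_on \<Omega> G \<Longrightarrow> x \<in> \<Omega> \<Longrightarrow>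
    CL (dirac (\<lambda>y. F y \<oplus>\<^sub>c G y) x) = CL (dirac F x) + CL (dirac G x)"
  by (simp add: CL_dirac cl_pd_add[OF open_\<Omega>] CL_add distrib_left sum.distrib)

lemma CL_dirac_minus: "cl_smooth_on \<Omega> F \<Longrightarrow> cl_smooth_on \<Omega> G \<Longrightarrow> x \<in> \<Omega> \<Longrightarrow>
    CL (dirac (\<lambda>y. F y \<ominus>\<^sub>c G y) x) = CL (dirac F x) - CL (dirac G x)"
  by (simp add: CL_dirac CL_pd_minus right_diff_distrib sum_subtractf)

lemma CL_dirac_mult: "cl_smooth_on \<Omega> F \<Longrightarrow> cl_smooth_on \<Omega> G \<Longrightarrow> x \<in> \<Omega> \<Longrightarrow>
    CL (dirac (\<lambda>y. F y \<otimes>\<^sub>c G y) x)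
      = CL (dirac F x) * CL (G x) + (\<Sum>j\<in>UNIV. E j * CL (F x) * CL (cl_pd j G x))"
  by (simp add: CL_dirac CL_pd_mult distrib_left sum.distrib sum_distrib_right mult.assoc)

lemma CL_dirac_scale: "cl_smooth_on \<Omega> F \<Longrightarrow> x \<in> \<Omega> \<Longrightarrow>
    CL (dirac (\<lambda>y. c \<cdot>\<^sub>c F y) x) = scalar c * CL (dirac F x)"
proof -
  have "E j * (scalar c * X) = scalar c * (E j * X)" for j and X :: "'n clifford"
    by (metis mult.assoc scalar_commute)
  then show "cl_smooth_on \<Omega> F \<Longrightarrow> x \<in> \<Omega> \<Longrightarrow> ?thesis"
    by (simp add: CL_dirac cl_pd_scale[OF open_\<Omega>] CL_scale sum_distrib_left)
qed

lemma CL_dirac_sum: "finite I \<Longrightarrow> (\<And>i. i \<in> I \<Longrightarrow> cl_smooth_on \<Omega> (F i)) \<Longrightarrow> x \<in> \<Omega> \<Longrightarrow>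
    CL (dirac (\<lambda>y. cl_sum (\<lambda>i. F i y) I) x) = (\<Sum>i\<in>I. CL (dirac (F i) x))"
  by (simp add: CL_dirac CL_pd_sum sum_distrib_left) (rule sum.swap)

lemma CL_dirac_const: "CL (dirac (\<lambda>y. K) x) = 0"
  by (simp add: CL_dirac CL_pd_const)

lemma CL_dirac_const_mult: "cl_smooth_on \<Omega> G \<Longrightarrow> x \<in> \<Omega> \<Longrightarrow>
    CL (dirac (\<lambda>y. K \<otimes>\<^sub>c G y) x) = (\<Sum>j\<in>UNIV. E j * CL K * CL (cl_pd j G x))"
  using CL_dirac_mult[of "\<lambda>y. K" G x] by (simp add: cl_smooth_on_const[OF open_\<Omega>] CL_dirac_const)

end

section \<open>The algebraic core\<close>

text \<open>Expanded by the Leibniz rule, the left-hand side is \<open>D\<^sup>-\<^sup>f\<close> applied to the defect of \<open>g\<close>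
  and the right-hand side is the defect of \<open>h = D g - g f\<close> (with \<open>c = \<lambda>\<^sup>2\<close>, \<open>U = u\<close>,
  \<open>d\<^sub>i = D\<^sup>i g\<close>, \<open>G = g\<close>, \<open>Gk k = \<partial>\<^sub>k g\<close>, \<open>Fv = f\<close>, \<open>Fk k = \<partial>\<^sub>k f\<close>, \<open>Fkj k j = \<partial>\<^sub>k \<partial>\<^sub>j f\<close>,
  \<open>sg j = g\<^sub>j\<close>, \<open>sgk k j = (\<partial>\<^sub>k g)\<^sub>j\<close>, \<open>B k = [e\<^sub>k H\<^sub>2]\<^sub>1\<close>).
  Their difference is a combination of the anticommutation relations.\<close>

lemma twisted_dirac_defect_identity:
  fixes e Gk Fk sg B :: "'i::finite \<Rightarrow> 'a::ring_1"
    and Fkj sgk :: "'i \<Rightarrow> 'i \<Rightarrow> 'a"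
    and G Fv d1 d2 d3 c U :: 'a
  assumes d1: "d1 = (\<Sum>k\<in>UNIV. e k * Gk k)"
    and U: "U = (\<Sum>j\<in>UNIV. e j * Fk j) - Fv * Fv"
    and anticomm_G: "\<And>j. e j * G + G * e j = - (2 * sg j)"
    and anticomm_Gk: "\<And>k j. e j * Gk k + Gk k * e j = - (2 * sgk k j)"
    and comm_h: "\<And>k. e k * (d1 - G * Fv) - (d1 - G * Fv) * e k = 2 * B k"
  shows "(d3 + d1 * U + (\<Sum>k\<in>UNIV. e k * G * ((\<Sum>j\<in>UNIV. e j * Fkj k j) - (Fk k * Fv + Fv * Fk k)))
          + 2 * (\<Sum>k\<in>UNIV. e k * (\<Sum>j\<in>UNIV. sgk k j * Fk j + sg j * Fkj k j)) - c * d1)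
        - (d2 + G * U + 2 * (\<Sum>j\<in>UNIV. sg j * Fk j) - c * G) * Fv
       = d3 - (d2 * Fv + (\<Sum>k\<in>UNIV. e k * d1 * Fk k)
              + (\<Sum>k\<in>UNIV. \<Sum>j\<in>UNIV. e k * e j * (Gk k * Fk j + G * Fkj k j)))
         + (d1 - G * Fv) * U + 2 * (\<Sum>k\<in>UNIV. B k * Fk k) - c * (d1 - G * Fv)"
    (is "?lhs = ?rhs")
proof -
  define T1 where "T1 = (\<Sum>k\<in>UNIV. \<Sum>j\<in>UNIV. e k * (G * e j + e j * G + 2 * sg j) * Fkj k j)"
  define T2 where "T2 = (\<Sum>k\<in>UNIV. (e k * G + 2 * sg k + G * e k) * Fk k * Fv)"
  define T3 where "T3 = (\<Sum>k\<in>UNIV. (e k * (d1 - G * Fv) - (d1 - G * Fv) * e k - 2 * B k) * Fk k)"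
  define T4 where "T4 = (\<Sum>k\<in>UNIV. \<Sum>j\<in>UNIV. e k * (e j * Gk k + Gk k * e j + 2 * sgk k j) * Fk j)"
  have "e k * G + 2 * sg k + G * e k = (e k * G + G * e k) + 2 * sg k" for k
    by (simp add: algebra_simps)
  then have "e k * G + 2 * sg k + G * e k = 0" for k
    by (simp add: anticomm_G)
  then have "T1 = 0" "T2 = 0" "T3 = 0" "T4 = 0"
    unfolding T1_def T2_def T3_def T4_def using anticomm_G anticomm_Gk comm_h
    by (simp_all add: add.commute)
  moreover have "?lhs - ?rhs = T1 - T2 + T3 + T4"
    unfolding T1_def T2_def T3_def T4_def U d1
    by (simp add: algebra_simps sum_distrib_left sum_distrib_right sum.distrib sum_subtractf
        mult_2 distrib_left) (rule sum.swap)
  ultimately show ?thesis by simp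
qed

section \<open>The twisted Dirac operator intertwines the two equations\<close>

definition vector_schr_defect ::
    "complex \<Rightarrow> ((real, 'n::{finite,linorder}) vec \<Rightarrow> 'n cl) \<Rightarrow> ((real, 'n) vec \<Rightarrow> 'n cl)
      \<Rightarrow> (real, 'n) vec \<Rightarrow> 'n cl" where
  "vector_schr_defect c f g x =
     (schr (potential f) g x \<oplus>\<^sub>c (2 \<cdot>\<^sub>c cl_sum (\<lambda>j. g x {j} \<cdot>\<^sub>c cl_pd j f x) UNIV)) \<ominus>\<^sub>c c \<cdot>\<^sub>c g x"

definition even_schr_defect ::
    "complex \<Rightarrow> ((real, 'n::{finite,linorder}) vec \<Rightarrow> 'n cl) \<Rightarrow> ((real, 'n) vec \<Rightarrow> 'n cl)
      \<Rightarrow> (real, 'n) vec \<Rightarrow> 'n cl" where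
  "even_schr_defect c f h x =
     (schr (potential f) h x
       \<oplus>\<^sub>c (2 \<cdot>\<^sub>c cl_sum (\<lambda>j. grade 1 (cl_e j \<otimes>\<^sub>c grade 2 (h x)) \<otimes>\<^sub>c cl_pd j f x) UNIV))
       \<ominus>\<^sub>c c \<cdot>\<^sub>c h x"

lemma CL_schr: "CL (schr u F x) = CL (dirac (dirac F) x) + CL (F x) * CL (u x)"
  unfolding schr_def laplace_def by (simp add: CL_add CL_mult)

lemma CL_potential: "CL (potential f x) = (\<Sum>j\<in>UNIV. E j * CL (cl_pd j f x)) - CL (f x) * CL (f x)"
  unfolding potential_def by (simp add: CL_minus CL_mult CL_dirac)

lemma CL_vector_schr_defect:
  "CL (vector_schr_defect c f g x) = CL (dirac (dirac g) x) + CL (g x) * CL (potential f x)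
     + 2 * (\<Sum>j\<in>UNIV. scalar (g x {j}) * CL (cl_pd j f x)) - scalar c * CL (g x)"
  unfolding vector_schr_defect_def
  by (simp add: CL_minus CL_add CL_mult CL_scale CL_sum CL_schr scalar_two)

lemma CL_dirac_tw: "CL (dirac_tw f G x) = CL (dirac G x) - CL (G x) * CL (f x)"
  unfolding dirac_tw_def by (simp add: CL_minus CL_mult)

lemma CL_even_schr_defect:
  "CL (even_schr_defect c f h x) = CL (dirac (dirac h) x) + CL (h x) * CL (potential f x)
     + 2 * (\<Sum>k\<in>UNIV. CL (grade 1 (cl_e k \<otimes>\<^sub>c grade 2 (h x))) * CL (cl_pd k f x)) - scalar c * CL (h x)"
  unfolding even_schr_defect_def
  by (simp add: CL_minus CL_add CL_mult CL_scale CL_sum CL_schr scalar_two)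

lemma dirac_tw_grade_0_2:
  fixes f g :: "(real, 'n::{finite,linorder}) vec \<Rightarrow> 'n cl"
  assumes "open \<Omega>" "\<And>y. y \<in> \<Omega> \<Longrightarrow> grade 1 (f y) = f y" "\<And>y. y \<in> \<Omega> \<Longrightarrow> grade 1 (g y) = g y"
    and "x \<in> \<Omega>"
  shows "grade 0 (dirac_tw f g x) \<oplus>\<^sub>c grade 2 (dirac_tw f g x) = dirac_tw f g x"
proof (rule grade_0_add_grade_2)
  fix C :: "'n set"
  assume C: "card C \<noteq> 0" "card C \<noteq> 2"
  have "(cl_e j \<otimes>\<^sub>c cl_pd j g x) C = 0" for j
    using vector_mult_grade_0_2[OF grade_cl_e grade_cl_pd[OF assms(1,3,4)] C] .
  moreover have "(g x \<otimes>\<^sub>c f x) C = 0"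
    using vector_mult_grade_0_2[OF assms(3,2)[OF assms(4)] C] .
  ultimately show "dirac_tw f g x C = 0"
    unfolding dirac_tw_def dirac_def cl_minus_def cl_sum_def by simp
qed

context
  fixes \<Omega> :: "(real, 'n::{finite,linorder}) vec set"
    and f g :: "(real, 'n) vec \<Rightarrow> 'n cl"
  assumes open_\<Omega>: "open \<Omega>"
    and smooth_f: "cl_smooth_on \<Omega> f"
    and smooth_g: "cl_smooth_on \<Omega> g"
begin

private lemmas cl_smooth_on_rules = smooth_f smooth_g
  cl_smooth_on_add[OF open_\<Omega>] cl_smooth_on_minus[OF open_\<Omega>]
  cl_smooth_on_scale[OF open_\<Omega>] cl_smooth_on_coeff_scale[OF open_\<Omega>] cl_smooth_on_const[OF open_\<Omega>]
  cl_smooth_on_mult[OF open_\<Omega>] cl_smooth_on_sum[OF open_\<Omega>] cl_smooth_on_cl_pd[OF open_\<Omega>]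
  cl_smooth_on_dirac[OF open_\<Omega>]

lemma dirac_dirac_tw:
  assumes "y \<in> \<Omega>"
  shows "dirac (dirac_tw f g) y
    = dirac (dirac g) y \<ominus>\<^sub>c (dirac g y \<otimes>\<^sub>c f y \<oplus>\<^sub>c cl_sum (\<lambda>j. cl_e j \<otimes>\<^sub>c (g y \<otimes>\<^sub>c cl_pd j f y)) UNIV)"
proof -
  have "dirac_tw f g = (\<lambda>y. dirac g y \<ominus>\<^sub>c g y \<otimes>\<^sub>c f y)"
    by (simp add: fun_eq_iff dirac_tw_def)
  then have "CL (dirac (dirac_tw f g) y) = CL (dirac (dirac g) y) - CL (dirac (\<lambda>y. g y \<otimes>\<^sub>c f y) y)"
    using assms by (simp add: CL_dirac_minus[OF open_\<Omega>] cl_smooth_on_rules)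
  then show ?thesis
    using assms by (simp add: CL_dirac_mult[OF open_\<Omega>] cl_smooth_on_rules CL_minus CL_add CL_sum CL_mult
        mult.assoc flip: CL_eq_iff)
qed

lemma CL_dirac_dirac_dirac_tw:
  assumes "x \<in> \<Omega>"
  shows "CL (dirac (dirac (dirac_tw f g)) x) = CL (dirac (dirac (dirac g)) x)
    - (CL (dirac (dirac g) x) * CL (f x) + (\<Sum>k\<in>UNIV. E k * CL (dirac g x) * CL (cl_pd k f x))
      + (\<Sum>k\<in>UNIV. \<Sum>j\<in>UNIV. E k * E j
           * (CL (cl_pd k g x) * CL (cl_pd j f x) + CL (g x) * CL (cl_pd k (cl_pd j f) x))))"
proof -
  have "dirac (dirac (dirac_tw f g)) x = dirac (\<lambda>y. dirac (dirac g) y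
      \<ominus>\<^sub>c (dirac g y \<otimes>\<^sub>c f y \<oplus>\<^sub>c cl_sum (\<lambda>j. cl_e j \<otimes>\<^sub>c (g y \<otimes>\<^sub>c cl_pd j f y)) UNIV)) x"
    by (rule dirac_cong[OF open_\<Omega> assms dirac_dirac_tw])
  then show ?thesis
    using assms
    by (simp add: CL_dirac_minus[OF open_\<Omega>] CL_dirac_add[OF open_\<Omega>] CL_dirac_mult[OF open_\<Omega>]
        CL_dirac_sum[OF open_\<Omega>] CL_dirac_const_mult[OF open_\<Omega>] CL_dirac_const[OF open_\<Omega>]
        CL_pd_mult[OF open_\<Omega>] cl_smooth_on_rules
        distrib_left sum.distrib mult.assoc) (subst (1 2) sum.swap, rule refl)
qed

lemma cl_smooth_on_potential: "cl_smooth_on \<Omega> (potential f)"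
proof -
  have "potential f = (\<lambda>y. dirac f y \<ominus>\<^sub>c f y \<otimes>\<^sub>c f y)"
    by (simp add: fun_eq_iff potential_def)
  then show ?thesis by (simp add: cl_smooth_on_rules)
qed

lemma CL_pd_potential:
  assumes "x \<in> \<Omega>"
  shows "CL (cl_pd k (potential f) x) = (\<Sum>j\<in>UNIV. E j * CL (cl_pd k (cl_pd j f) x))
    - (CL (cl_pd k f x) * CL (f x) + CL (f x) * CL (cl_pd k f x))"
proof -
  have "potential f = (\<lambda>y. cl_sum (\<lambda>j. cl_e j \<otimes>\<^sub>c cl_pd j f y) UNIV \<ominus>\<^sub>c f y \<otimes>\<^sub>c f y)"
    by (simp add: fun_eq_iff potential_def dirac_def)
  then show ?thesis
    using assms by (simp add: CL_pd_minus[OF open_\<Omega>] CL_pd_sum[OF open_\<Omega>] CL_pd_mult[OF open_\<Omega>]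
        CL_pd_const[OF open_\<Omega>] cl_smooth_on_rules)
qed

lemma CL_dirac_vector_schr_defect:
  assumes "x \<in> \<Omega>"
  shows "CL (dirac (vector_schr_defect c f g) x) = CL (dirac (dirac (dirac g)) x)
    + CL (dirac g x) * CL (potential f x) + (\<Sum>k\<in>UNIV. E k * CL (g x) * CL (cl_pd k (potential f) x))
    + 2 * (\<Sum>k\<in>UNIV. E k * (\<Sum>j\<in>UNIV. scalar (cl_pd k g x {j}) * CL (cl_pd j f x)
                                         + scalar (g x {j}) * CL (cl_pd k (cl_pd j f) x)))
    - scalar c * CL (dirac g x)"
proof -
  have "vector_schr_defect c f g = (\<lambda>y. ((dirac (dirac g) y \<oplus>\<^sub>c g y \<otimes>\<^sub>c potential f y)
      \<oplus>\<^sub>c 2 \<cdot>\<^sub>c cl_sum (\<lambda>j. g y {j} \<cdot>\<^sub>c cl_pd j f y) UNIV) \<ominus>\<^sub>c c \<cdot>\<^sub>c g y)"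
    by (simp add: fun_eq_iff vector_schr_defect_def schr_def laplace_def)
  then show ?thesis
    using assms cl_smooth_on_potential
    by (simp add: CL_dirac_minus[OF open_\<Omega>] CL_dirac_add[OF open_\<Omega>] CL_dirac_mult[OF open_\<Omega>]
        CL_dirac_scale[OF open_\<Omega>] CL_dirac[of "\<lambda>y. cl_sum (\<lambda>j. g y {j} \<cdot>\<^sub>c cl_pd j f y) UNIV"]
        CL_pd_sum[OF open_\<Omega>]
        CL_pd_coeff_scale[OF open_\<Omega>] cl_smooth_on_rules scalar_two)
qed

end

lemma dirac_tw_vector_schr_defect:
  fixes f g :: "(real, 'n::{finite,linorder}) vec \<Rightarrow> 'n cl"
  assumes open_\<Omega>: "open \<Omega>" and smooth_f: "cl_smooth_on \<Omega> f" and smooth_g: "cl_smooth_on \<Omega> g"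
    and vector_f: "\<And>y. y \<in> \<Omega> \<Longrightarrow> grade 1 (f y) = f y"
    and vector_g: "\<And>y. y \<in> \<Omega> \<Longrightarrow> grade 1 (g y) = g y"
    and x: "x \<in> \<Omega>"
  shows "dirac_tw f (vector_schr_defect c f g) x
       = even_schr_defect c f (\<lambda>y. grade 0 (dirac_tw f g y) \<oplus>\<^sub>c grade 2 (dirac_tw f g y)) x"
proof -
  define h where "h y = grade 0 (dirac_tw f g y) \<oplus>\<^sub>c grade 2 (dirac_tw f g y)" for y
  have h_eq: "h y = dirac_tw f g y" if "y \<in> \<Omega>" for y
    unfolding h_def using dirac_tw_grade_0_2[OF open_\<Omega> vector_f vector_g that] .
  have D2h: "dirac (dirac h) x = dirac (dirac (dirac_tw f g)) x"
    by (intro dirac_cong[OF open_\<Omega> x] dirac_cong[OF open_\<Omega> _ h_eq])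
  have CLh: "CL (h x) = CL (dirac g x) - CL (g x) * CL (f x)"
    by (simp add: h_eq[OF x] CL_dirac_tw)
  have vector_gk: "grade 1 (cl_pd k g x) = cl_pd k g x" for k
    by (rule grade_cl_pd[OF open_\<Omega>]) (use vector_g x in auto)
  have comm_h: "E k * CL (h x) - CL (h x) * E k = 2 * CL (grade 1 (cl_e k \<otimes>\<^sub>c grade 2 (h x)))" for k
    by (rule commutator_cl_e_grade_0_2)
      (simp add: h_eq[OF x] dirac_tw_grade_0_2[OF open_\<Omega> vector_f vector_g x])
  have "CL (dirac_tw f (vector_schr_defect c f g) x) = CL (even_schr_defect c f h x)"
    unfolding CL_dirac_tw CL_even_schr_defect CL_vector_schr_defect D2h CLh
      CL_dirac_vector_schr_defect[OF open_\<Omega> smooth_f smooth_g x]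
      CL_pd_potential[OF open_\<Omega> smooth_f smooth_g x]
      CL_dirac_dirac_dirac_tw[OF open_\<Omega> smooth_f smooth_g x]
    by (rule twisted_dirac_defect_identity[OF CL_dirac[of g x] CL_potential[of f x]
          vector_anticommute_cl_e[OF vector_g[OF x]] vector_anticommute_cl_e[OF vector_gk]
          comm_h[unfolded CLh]])
  then show ?thesis unfolding h_def[abs_def] by (simp add: CL_eq_iff)
qed

theorem proposition6p3:
  fixes \<Omega> :: "((real, 'n::{finite,linorder}) vec) set"
    and lam :: complex
    and f g :: "(real, 'n) vec \<Rightarrow> 'n cl"
  assumes "CARD('n) > 1"
    and "open \<Omega>"
    and "lam \<noteq> 0"
    and "\<forall>x\<in>\<Omega>. is_vector (f x)" and "cl_smooth_on \<Omega> f"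
    and "\<forall>x\<in>\<Omega>. is_vector (g x)" and "cl_smooth_on \<Omega> g"
    and "\<forall>x\<in>\<Omega>. schr (potential f) g x
                 \<oplus>\<^sub>c (2 \<cdot>\<^sub>c cl_sum (\<lambda>j. g x {j} \<cdot>\<^sub>c cl_pd j f x) UNIV)
               = lam\<^sup>2 \<cdot>\<^sub>c g x"
  shows "\<forall>x\<in>\<Omega>. schr (potential f) (\<lambda>y. grade 0 (dirac_tw f g y) \<oplus>\<^sub>c grade 2 (dirac_tw f g y)) x
                 \<oplus>\<^sub>c (2 \<cdot>\<^sub>c cl_sum (\<lambda>j. grade 1 (cl_e j \<otimes>\<^sub>c grade 2 (dirac_tw f g x)) \<otimes>\<^sub>c cl_pd j f x) UNIV)
               = lam\<^sup>2 \<cdot>\<^sub>c (grade 0 (dirac_tw f g x) \<oplus>\<^sub>c grade 2 (dirac_tw f g x))"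
proof -
  have defect_0: "vector_schr_defect (lam\<^sup>2) f g y = (\<lambda>_. 0)" if "y \<in> \<Omega>" for y
    using assms(8) that by (simp add: vector_schr_defect_def cl_minus_def)
  have "even_schr_defect (lam\<^sup>2) f (\<lambda>y. grade 0 (dirac_tw f g y) \<oplus>\<^sub>c grade 2 (dirac_tw f g y)) x = (\<lambda>_. 0)"
    if x: "x \<in> \<Omega>" for x
  proof -
    have "even_schr_defect (lam\<^sup>2) f (\<lambda>y. grade 0 (dirac_tw f g y) \<oplus>\<^sub>c grade 2 (dirac_tw f g y)) x
        = dirac_tw f (vector_schr_defect (lam\<^sup>2) f g) x"
      by (rule dirac_tw_vector_schr_defect[OF assms(2,5,7) _ _ x, symmetric])
        (use assms(4,6) in \<open>auto simp: is_vector_def\<close>)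
    also have "\<dots> = (\<lambda>_. 0)"
      by (rule dirac_tw_locally_zero[OF assms(2) x defect_0])
    finally show ?thesis .
  qed
  then show ?thesis
    by (simp add: even_schr_defect_def cl_minus_def fun_eq_iff grade_2_grade_0_add_grade_2)
qed

end
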